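(* Let $\mathcal{G}$ be a directed path on $N$ nodes with unit edge weights, whose nodes are labelled $1,\dots,N$ in the order in which they appear along the path starting from the root (so the edges are from $i+1$ to $i$ for $i=1,\dots,N-1$, with weight $1$). Then the entries of its matrix $X$ are $$x_{k,j}=\frac{2N^2+3N+1+3k^2+3j^2-3(N+1)k-3(N+1)j}{3N}-|k-j|,\qquad 1\le k,j\le N.$$
   Context: For a directed graph with nonnegative adjacency matrix $A=[a_{i,j}]$ ($a_{i,j}>0$ iff there is an edge from $i$ to $j$), let $D$ be the diagonal matrix of out-degrees $d_k=\sum_j a_{k,j}$ and $L=D-A$. Let $\Pi=I_N-\frac1N\mathbf{1}_N\mathbf{1}_N^T$, $Q\in\mathbb{R}^{(N-1)\times N}$ with $Q\mathbf{1}_N=0$, $QQ^T=I_{N-1}$, $Q^TQ=\Pi$; $\overline L=QLQ^T$; $\Sigma$ the unique solution of $\overline L\Sigma+\Sigma\overline L^T=I_{N-1}$; and $X=2Q^T\Sigma Q$ (independent of $Q$). The root of the path is its unique node of out-degree $0$. *)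

theory Defs
  imports "Jordan_Normal_Form.Matrix"
begin

text \<open>Matrices are 0-indexed: node k (1-based in the paper) is index k-1.\<close>

definition out_degree_mat :: "real mat \<Rightarrow> real mat" where
  "out_degree_mat A = mat (dim_row A) (dim_row A)
     (\<lambda>(i,j). if i = j then (\<Sum>l<dim_col A. A $$ (i,l)) else 0)"

definition laplacian :: "real mat \<Rightarrow> real mat" where
  "laplacian A = out_degree_mat A - A"

definition centering_mat :: "nat \<Rightarrow> real mat" where
  "centering_mat N = 1\<^sub>m N - (1 / real N) \<cdot>\<^sub>m mat N N (\<lambda>_. 1)"

text \<open>Directed path with unit weights, edges from node i+1 to node i (1-based),
  i.e. a_{r,c} = 1 iff r = c+1 (0-based).\<close>
definition path_adj :: "nat \<Rightarrow> real mat" where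
  "path_adj N = mat N N (\<lambda>(r,c). if r = c + 1 then 1 else 0)"

definition X_mat :: "real mat \<Rightarrow> real mat \<Rightarrow> real mat" where
  "X_mat Q \<Sigma> = 2 \<cdot>\<^sub>m (transpose_mat Q * \<Sigma> * Q)"

end

theory Submission
  imports Defs
begin

text \<open>Write \<open>P\<close> for the centering matrix and \<open>L = 1 - S\<close> for the Laplacian of the path,
  \<open>S\<close> the down-shift. Conjugating the Lyapunov equation for \<open>\<Sigma>\<close> by \<open>Q\<close> shows that \<open>X\<close> is
  centered (\<open>P X = X = X P\<close>) and solves \<open>P (L X + X L\<^sup>T) P = 2 P\<close>. The claimed matrix \<open>F\<close> has
  zero row and column sums, and \<open>L F + F L\<^sup>T\<close> is \<open>2\<close> times the identity plus a matrix with
  constant rows plus one with constant columns; centering kills the last two, so \<open>F\<close> solves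
  the same problem. For \<open>D = X - F\<close> these conditions become the Sylvester equation
  \<open>M D + D M\<^sup>T = 2 D\<close> with \<open>M = P S\<close>, and \<open>M\<close> is nilpotent: \<open>S\<close> shifts rows down and \<open>P\<close>
  subtracts column means, so every application of \<open>M\<close> makes one more leading row equal to row 0,
  and a matrix with equal rows and zero column sums vanishes. A Sylvester equation with
  nilpotent coefficients and nonzero right-hand scalar has only the zero solution.\<close>

lemma pow_mat_Suc_left:
  assumes A: "A \<in> carrier_mat n n"
  shows "A ^\<^sub>m Suc k = A * A ^\<^sub>m k"
proof (induction k)
  case 0
  show ?case using A by simp
next
  case (Suc k)
  have "A ^\<^sub>m Suc (Suc k) = (A * A ^\<^sub>m k) * A" using Suc by simp
  also have "\<dots> = A * (A ^\<^sub>m k * A)" using A by (intro assoc_mult_mat) auto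
  finally show ?case by simp
qed

lemma pow_mat_eq_zero_mono:
  assumes A: "A \<in> carrier_mat n n" and nil: "A ^\<^sub>m k = 0\<^sub>m n n" and "k \<le> a"
  shows "A ^\<^sub>m a = 0\<^sub>m n n"
  using \<open>k \<le> a\<close>
proof (induction a rule: dec_induct)
  case (step a)
  thus ?case using A by simp
qed (rule nil)

lemma transpose_pow_mat:
  fixes A :: "'a::comm_semiring_1 mat"
  assumes A: "A \<in> carrier_mat n n"
  shows "transpose_mat A ^\<^sub>m k = transpose_mat (A ^\<^sub>m k)"
proof (induction k)
  case 0
  show ?case using A by simp
next
  case (Suc k)
  have "transpose_mat A ^\<^sub>m Suc k = transpose_mat (A ^\<^sub>m k) * transpose_mat A" using Suc by simp
  also have "\<dots> = transpose_mat (A * A ^\<^sub>m k)"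
    using transpose_mult[OF A pow_carrier_mat[OF A]] by simp
  finally show ?case using pow_mat_Suc_left[OF A] by simp
qed

lemma sylvester_nilpotent_eq_zero:
  fixes A B E :: "'a::field mat"
  assumes A: "A \<in> carrier_mat n n" and B: "B \<in> carrier_mat m m" and E: "E \<in> carrier_mat n m"
    and A_nil: "A ^\<^sub>m k = 0\<^sub>m n n" and B_nil: "B ^\<^sub>m k = 0\<^sub>m m m"
    and sylvester: "A * E + E * B = c \<cdot>\<^sub>m E" and "c \<noteq> 0"
  shows "E = 0\<^sub>m n m"
proof -
  define T where "T a b = A ^\<^sub>m a * (E * B ^\<^sub>m b)" for a b
  have T_carrier: "T a b \<in> carrier_mat n m" for a b
    unfolding T_def using A B E by auto
  have T_vanish: "T a b = 0\<^sub>m n m" if "k \<le> a \<or> k \<le> b" for a b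
    using that pow_mat_eq_zero_mono[OF A A_nil] pow_mat_eq_zero_mono[OF B B_nil] A B E
    unfolding T_def by auto
  have T_step: "c \<cdot>\<^sub>m T a b = T (Suc a) b + T a (Suc b)" for a b
  proof -
    have Aa: "A ^\<^sub>m a \<in> carrier_mat n n" and Bb: "B ^\<^sub>m b \<in> carrier_mat m m"
      using A B by auto
    have "c \<cdot>\<^sub>m T a b = A ^\<^sub>m a * ((c \<cdot>\<^sub>m E) * B ^\<^sub>m b)"
      unfolding T_def using Aa Bb E
      by (simp add: mult_smult_distrib[OF Aa, of _ m] mult_smult_assoc_mat[OF E Bb])
    also have "\<dots> = A ^\<^sub>m a * ((A * E) * B ^\<^sub>m b) + A ^\<^sub>m a * ((E * B) * B ^\<^sub>m b)"
    proof -
      have "(A * E + E * B) * B ^\<^sub>m b = (A * E) * B ^\<^sub>m b + (E * B) * B ^\<^sub>m b"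
        using A B E Bb by (intro add_mult_distrib_mat) auto
      moreover have "A * E * B ^\<^sub>m b \<in> carrier_mat n m" "E * B * B ^\<^sub>m b \<in> carrier_mat n m"
        using A B E Bb by auto
      ultimately show ?thesis unfolding sylvester[symmetric]
        by (simp only:) (rule mult_add_distrib_mat[OF Aa])
    qed
    also have "\<dots> = T (Suc a) b + T a (Suc b)"
      unfolding T_def pow_mat_Suc_left[OF B] using Aa Bb A B E
      by (simp add: assoc_mult_mat[of _ n n _ n _ m] assoc_mult_mat[of _ n n _ m _ m]
        assoc_mult_mat[of _ n m _ m _ m])
    finally show ?thesis .
  qed
  \<comment> \<open>downward induction on \<open>a + b\<close>, starting where \<open>T_vanish\<close> applies\<close>
  have "T a b = 0\<^sub>m n m" if "2 * k \<le> a + b + d" for a b d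
    using that
  proof (induction d arbitrary: a b)
    case 0
    thus ?case by (intro T_vanish) arith
  next
    case (Suc d)
    hence "c \<cdot>\<^sub>m T a b = 0\<^sub>m n m" using T_carrier by (simp add: T_step)
    hence "c * T a b $$ (i, j) = 0" if "i < n" "j < m" for i j
      using that T_carrier[of a b] by (metis carrier_matD index_smult_mat(1) index_zero_mat(1))
    thus ?case using \<open>c \<noteq> 0\<close> T_carrier[of a b] by (intro eq_matI) auto
  qed
  from this[of 0 0 "2 * k"] show ?thesis using A B E unfolding T_def by simp
qed

lemma centering_mat_dim[simp]:
  "dim_row (centering_mat N) = N" "dim_col (centering_mat N) = N"
  by (simp_all add: centering_mat_def)

lemma centering_mat_carrier[simp]: "centering_mat N \<in> carrier_mat N N"
  by (rule carrier_matI) simp_all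

lemma centering_mat_index:
  "i < N \<Longrightarrow> j < N \<Longrightarrow> centering_mat N $$ (i, j) = (if i = j then 1 else 0) - 1 / real N"
  by (simp add: centering_mat_def)

lemma transpose_centering_mat: "transpose_mat (centering_mat N) = centering_mat N"
  by (rule eq_matI) (auto simp: centering_mat_index)

lemma centering_mult_index:
  assumes Z: "Z \<in> carrier_mat N m" and "i < N" "j < m"
  shows "(centering_mat N * Z) $$ (i, j) = Z $$ (i, j) - (\<Sum>l<N. Z $$ (l, j)) / real N"
proof -
  have "(centering_mat N * Z) $$ (i, j)
      = (\<Sum>l<N. ((if i = l then 1 else 0) - 1 / real N) * Z $$ (l, j))"
    using assms by (simp add: scalar_prod_def atLeast0LessThan centering_mat_index)
  also have "\<dots> = (\<Sum>l<N. (if i = l then Z $$ (l, j) else 0) - Z $$ (l, j) / real N)"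
    by (intro sum.cong refl) (simp add: left_diff_distrib)
  finally show ?thesis using \<open>i < N\<close> by (simp add: sum_subtractf sum_divide_distrib)
qed

lemma mult_centering_index:
  assumes Z: "Z \<in> carrier_mat m N" and "i < m" "j < N"
  shows "(Z * centering_mat N) $$ (i, j) = Z $$ (i, j) - (\<Sum>l<N. Z $$ (i, l)) / real N"
proof -
  have "(Z * centering_mat N) $$ (i, j)
      = (\<Sum>l<N. Z $$ (i, l) * ((if l = j then 1 else 0) - 1 / real N))"
    using assms by (simp add: scalar_prod_def atLeast0LessThan centering_mat_index)
  also have "\<dots> = (\<Sum>l<N. (if l = j then Z $$ (i, l) else 0) - Z $$ (i, l) / real N)"
    by (intro sum.cong refl) (simp add: right_diff_distrib)
  finally show ?thesis using \<open>j < N\<close> by (simp add: sum_subtractf sum_divide_distrib)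
qed

lemma centering_mult_zero_col_sums:
  assumes Z: "Z \<in> carrier_mat N m" and "\<And>j. j < m \<Longrightarrow> (\<Sum>l<N. Z $$ (l, j)) = 0"
  shows "centering_mat N * Z = Z"
  using assms by (intro eq_matI) (simp_all add: centering_mult_index del: index_mult_mat(1))

lemma mult_centering_zero_row_sums:
  assumes Z: "Z \<in> carrier_mat m N" and "\<And>i. i < m \<Longrightarrow> (\<Sum>l<N. Z $$ (i, l)) = 0"
  shows "Z * centering_mat N = Z"
  using assms by (intro eq_matI) (simp_all add: mult_centering_index del: index_mult_mat(1))

lemma col_sum_centering_mult:
  assumes Z: "Z \<in> carrier_mat N m" and "j < m"
  shows "(\<Sum>i<N. (centering_mat N * Z) $$ (i, j)) = 0"
proof -
  have "(\<Sum>i<N. (centering_mat N * Z) $$ (i, j))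
      = (\<Sum>i<N. Z $$ (i, j)) - real N * ((\<Sum>l<N. Z $$ (l, j)) / real N)"
    using assms by (simp add: centering_mult_index sum_subtractf del: index_mult_mat)
  thus ?thesis by (cases "N = 0") simp_all
qed

lemma centering_mat_idem: "centering_mat N * centering_mat N = centering_mat N"
proof (rule centering_mult_zero_col_sums)
  fix j assume "j < N"
  have "(\<Sum>l<N. centering_mat N $$ (l, j)) = (\<Sum>l<N. (if l = j then 1 else 0) - 1 / real N)"
    by (intro sum.cong) (simp_all add: centering_mat_index \<open>j < N\<close>)
  thus "(\<Sum>l<N. centering_mat N $$ (l, j)) = 0" using \<open>j < N\<close> by (simp add: sum_subtractf)
qed simp

lemma centering_mult_const_cols:
  "centering_mat N * mat N m (\<lambda>(i, j). g j) = 0\<^sub>m N m"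
proof (rule eq_matI)
  fix i j assume "i < dim_row (0\<^sub>m N m :: real mat)" "j < dim_col (0\<^sub>m N m :: real mat)"
  hence "i < N" "j < m" by simp_all
  thus "(centering_mat N * mat N m (\<lambda>(i, j). g j)) $$ (i, j) = 0\<^sub>m N m $$ (i, j)"
    by (subst centering_mult_index) auto
qed simp_all

lemma const_rows_mult_centering:
  "mat m N (\<lambda>(i, j). g i) * centering_mat N = 0\<^sub>m m N"
proof (rule eq_matI)
  fix i j assume "i < dim_row (0\<^sub>m m N :: real mat)" "j < dim_col (0\<^sub>m m N :: real mat)"
  hence "i < m" "j < N" by simp_all
  thus "(mat m N (\<lambda>(i, j). g i) * centering_mat N) $$ (i, j) = 0\<^sub>m m N $$ (i, j)"
    by (subst mult_centering_index) auto
qed simp_all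


text \<open>Row 0 of \<open>shift_mat N\<close> has its 1 in column \<open>0 - 1 = 0\<close>, so that
  \<open>1\<^sub>m N - shift_mat N\<close> has the zero row of the root.\<close>

definition shift_mat :: "nat \<Rightarrow> real mat" where
  "shift_mat N = mat N N (\<lambda>(i, j). if j = i - 1 then 1 else 0)"

lemma shift_mat_dim[simp]: "dim_row (shift_mat N) = N" "dim_col (shift_mat N) = N"
  by (simp_all add: shift_mat_def)

lemma shift_mat_carrier[simp]: "shift_mat N \<in> carrier_mat N N"
  by (rule carrier_matI) simp_all

lemma shift_mult_index:
  assumes Z: "Z \<in> carrier_mat N m" and i: "i < N" and j: "j < m"
  shows "(shift_mat N * Z) $$ (i, j) = Z $$ (i - 1, j)"
proof -
  have "(shift_mat N * Z) $$ (i, j) = (\<Sum>l<N. (if l = i - 1 then 1 else 0) * Z $$ (l, j))"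
    using Z i j by (simp add: shift_mat_def scalar_prod_def atLeast0LessThan)
  also have "\<dots> = (\<Sum>l<N. if l = i - 1 then Z $$ (l, j) else 0)"
    by (intro sum.cong) auto
  finally show ?thesis using i by simp
qed

lemma mult_transpose_shift_index:
  assumes Z: "Z \<in> carrier_mat m N" and i: "i < m" and j: "j < N"
  shows "(Z * transpose_mat (shift_mat N)) $$ (i, j) = Z $$ (i, j - 1)"
proof -
  have "(Z * transpose_mat (shift_mat N)) $$ (i, j)
      = (\<Sum>l<N. Z $$ (i, l) * (if l = j - 1 then 1 else 0))"
    using Z i j by (simp add: shift_mat_def scalar_prod_def atLeast0LessThan)
  also have "\<dots> = (\<Sum>l<N. if l = j - 1 then Z $$ (i, l) else 0)"
    by (intro sum.cong) auto
  finally show ?thesis using j by simp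
qed

lemma path_adj_dim[simp]: "dim_row (path_adj N) = N" "dim_col (path_adj N) = N"
  by (simp_all add: path_adj_def)

lemma out_degree_mat_dim[simp]:
  "dim_row (out_degree_mat A) = dim_row A" "dim_col (out_degree_mat A) = dim_row A"
  by (simp_all add: out_degree_mat_def)

lemma path_adj_index: "i < N \<Longrightarrow> j < N \<Longrightarrow> path_adj N $$ (i, j) = (if i = j + 1 then 1 else 0)"
  by (simp add: path_adj_def)

lemma laplacian_path_adj: "laplacian (path_adj N) = 1\<^sub>m N - shift_mat N"
proof (rule eq_matI)
  fix i j assume "i < dim_row (1\<^sub>m N - shift_mat N)" "j < dim_col (1\<^sub>m N - shift_mat N)"
  hence i: "i < N" and j: "j < N" by auto
  have out_degree: "(\<Sum>l<N. path_adj N $$ (i, l)) = (if i = 0 then 0 else 1)"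
  proof -
    have "(\<Sum>l<N. path_adj N $$ (i, l)) = (\<Sum>l<N. if l = i - 1 \<and> i \<noteq> 0 then 1 else 0)"
      using i by (intro sum.cong) (auto simp: path_adj_index)
    thus ?thesis using i by (simp add: sum.delta)
  qed
  have "laplacian (path_adj N) $$ (i, j) = out_degree_mat (path_adj N) $$ (i, j) - path_adj N $$ (i, j)"
    using i j by (simp add: laplacian_def)
  also have "\<dots> = (if i = j then (\<Sum>l<N. path_adj N $$ (i, l)) else 0) - path_adj N $$ (i, j)"
    using i j by (simp add: out_degree_mat_def)
  also have "\<dots> = (if i = j then 1 else 0) - (if j = i - 1 then 1 else 0)"
    unfolding out_degree path_adj_index[OF i j] by (cases i) auto
  also have "\<dots> = (1\<^sub>m N - shift_mat N) $$ (i, j)"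
    using i j by (simp add: shift_mat_def)
  finally show "laplacian (path_adj N) $$ (i, j) = (1\<^sub>m N - shift_mat N) $$ (i, j)" .
qed (simp_all add: laplacian_def)

lemma rows_equal_centered_eq_zero:
  fixes Z :: "real mat"
  assumes Z: "Z \<in> carrier_mat N m"
    and rows: "\<And>i j. i < N \<Longrightarrow> j < m \<Longrightarrow> Z $$ (i, j) = Z $$ (0, j)"
    and cols: "\<And>j. j < m \<Longrightarrow> (\<Sum>i<N. Z $$ (i, j)) = 0"
  shows "Z = 0\<^sub>m N m"
proof (rule eq_matI)
  fix i j assume "i < dim_row (0\<^sub>m N m :: real mat)" "j < dim_col (0\<^sub>m N m :: real mat)"
  hence i: "i < N" and j: "j < m" by auto
  have "(\<Sum>l<N. Z $$ (l, j)) = (\<Sum>l<N. Z $$ (0, j))"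
    by (rule sum.cong[OF refl], rule rows[OF _ j]) simp
  hence "Z $$ (0, j) = 0" using cols[OF j] i by simp
  thus "Z $$ (i, j) = 0\<^sub>m N m $$ (i, j)" using rows[OF i j] i j by simp
qed (use Z in simp_all)

definition centered_shift :: "nat \<Rightarrow> real mat" where
  "centered_shift N = centering_mat N * shift_mat N"

lemma centered_shift_dim[simp]: "dim_row (centered_shift N) = N" "dim_col (centered_shift N) = N"
  by (simp_all add: centered_shift_def)

lemma centered_shift_carrier[simp]: "centered_shift N \<in> carrier_mat N N"
  by (rule carrier_matI) simp_all

lemma centered_shift_pow_Suc:
  "centered_shift N ^\<^sub>m Suc a = centering_mat N * (shift_mat N * centered_shift N ^\<^sub>m a)"
  unfolding pow_mat_Suc_left[OF centered_shift_carrier]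
  by (subst (1) centered_shift_def)
    (rule assoc_mult_mat[OF centering_mat_carrier shift_mat_carrier pow_carrier_mat[OF centered_shift_carrier]])

lemma centered_shift_pow_rows_equal:
  assumes "i < N" "j < N" "i \<le> a"
  shows "(centered_shift N ^\<^sub>m a) $$ (i, j)
       = (centered_shift N ^\<^sub>m a) $$ (0, j)"
  using assms
proof (induction a arbitrary: i)
  case 0
  thus ?case by simp
next
  case (Suc a)
  let ?M = "centered_shift N"
  have cM: "?M \<in> carrier_mat N N" by simp
  have cW: "?M ^\<^sub>m a \<in> carrier_mat N N" using pow_carrier_mat[OF cM] .
  have cSW: "shift_mat N * ?M ^\<^sub>m a \<in> carrier_mat N N"
    using mult_carrier_mat[OF shift_mat_carrier cW] .
  have entry: "(?M ^\<^sub>m Suc a) $$ (l, j)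
      = (?M ^\<^sub>m a) $$ (l - 1, j) - (\<Sum>r<N. (shift_mat N * ?M ^\<^sub>m a) $$ (r, j)) / real N"
    if "l < N" for l
    unfolding centered_shift_pow_Suc using centering_mult_index[OF cSW that \<open>j < N\<close>]
      shift_mult_index[OF cW that \<open>j < N\<close>] by simp
  have prev_row: "(?M ^\<^sub>m a) $$ (i - 1, j) = (?M ^\<^sub>m a) $$ (0, j)"
    using Suc by (intro Suc.IH) auto
  have "0 < N" and "i < N" using Suc.prems by auto
  show ?case by (simp only: entry[OF \<open>i < N\<close>] entry[OF \<open>0 < N\<close>] prev_row diff_0_eq_0)
qed

lemma centered_shift_nilpotent:
  "centered_shift N ^\<^sub>m N = 0\<^sub>m N N"
proof (cases N)
  case 0
  thus ?thesis by (intro eq_matI) auto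
next
  case (Suc n)
  let ?M = "centered_shift N"
  have cM: "?M \<in> carrier_mat N N" by simp
  have pow: "?M ^\<^sub>m N = centering_mat N * (shift_mat N * ?M ^\<^sub>m n)"
    unfolding Suc by (rule centered_shift_pow_Suc)
  show ?thesis
  proof (rule rows_equal_centered_eq_zero)
    show "?M ^\<^sub>m N \<in> carrier_mat N N" using pow_carrier_mat[OF cM] .
    show "(?M ^\<^sub>m N) $$ (i, j) = (?M ^\<^sub>m N) $$ (0, j)" if "i < N" "j < N" for i j
      using that by (intro centered_shift_pow_rows_equal) auto
    show "(\<Sum>i<N. (?M ^\<^sub>m N) $$ (i, j)) = 0" if "j < N" for j
      unfolding pow
      using col_sum_centering_mult[OF mult_carrier_mat[OF shift_mat_carrier pow_carrier_mat[OF cM]] that] .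
  qed
qed

definition path_x :: "nat \<Rightarrow> nat \<Rightarrow> nat \<Rightarrow> real" where
  "path_x N k j = (2 * real N ^ 2 + 3 * real N + 1 + 3 * real (k+1) ^ 2 + 3 * real (j+1) ^ 2
       - 3 * (real N + 1) * real (k+1) - 3 * (real N + 1) * real (j+1)) / (3 * real N)
     - \<bar>real (k+1) - real (j+1)\<bar>"

definition path_X :: "nat \<Rightarrow> real mat" where
  "path_X N = mat N N (\<lambda>(k, j). path_x N k j)"

lemma path_X_dim[simp]: "dim_row (path_X N) = N" "dim_col (path_X N) = N"
  by (simp_all add: path_X_def)

lemma path_X_carrier[simp]: "path_X N \<in> carrier_mat N N"
  by (rule carrier_matI) simp_all

lemma path_X_index: "k < N \<Longrightarrow> j < N \<Longrightarrow> path_X N $$ (k, j) = path_x N k j"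
  by (simp add: path_X_def)

lemma path_x_sym: "path_x N k j = path_x N j k"
  unfolding path_x_def by (simp add: abs_minus_commute algebra_simps)

lemma path_x_shifted:
  "N > 0 \<Longrightarrow> path_x N k j = (2 * real N ^ 2 + 3 * real N + 1 + 3 * (real k + 1) ^ 2 + 3 * (real j + 1) ^ 2
       - 3 * (real N + 1) * (real k + 1) - 3 * (real N + 1) * (real j + 1)) / (3 * real N)
     - \<bar>real k - real j\<bar>"
  unfolding path_x_def by (simp add: algebra_simps)

lemma sum_lessThan_real: "(\<Sum>j<N. real j) = real N * (real N - 1) / 2"
  by (induction N) (auto simp: field_simps)

lemma sum_lessThan_real_square: "(\<Sum>j<N. (real j)\<^sup>2) = real N * (real N - 1) * (2 * real N - 1) / 6"
  by (induction N) (auto simp: field_simps power2_eq_square)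

lemma sum_lessThan_abs_diff:
  "k < N \<Longrightarrow> (\<Sum>j<N. \<bar>real k - real j\<bar>)
     = (real k * (real k + 1) + (real N - 1 - real k) * (real N - real k)) / 2"
proof (induction N)
  case 0
  thus ?case by simp
next
  case (Suc N)
  show ?case
  proof (cases "k < N")
    case True
    have "\<bar>real k - real N\<bar> = real N - real k" using True by simp
    thus ?thesis using Suc.IH[OF True] by (simp add: field_simps)
  next
    case False
    hence k: "k = N" using Suc.prems by simp
    have "(\<Sum>j<N. \<bar>real k - real j\<bar>) = (\<Sum>j<N. real N - real j)"
      using k by (intro sum.cong refl) auto
    also have "\<dots> = real N * real N - real N * (real N - 1) / 2"
      by (simp add: sum_subtractf sum_lessThan_real)
    finally show ?thesis using k by (simp add: field_simps)
  qed
qed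

lemma path_x_row_sum: assumes k: "k < N" shows "(\<Sum>j<N. path_x N k j) = 0"
proof -
  have N: "N > 0" using k by simp
  define a0 where "a0 = (2 * real N ^ 2 + 3 * real N + 1 + 3 * (real k + 1) ^ 2
    - 3 * (real N + 1) * (real k + 1) + 3 - 3 * (real N + 1)) / (3 * real N)"
  define a1 where "a1 = (6 - 3 * (real N + 1)) / (3 * real N)"
  define a2 where "a2 = 3 / (3 * real N)"
  have quadratic_in_j: "path_x N k j = a0 + a1 * real j + a2 * (real j)\<^sup>2 - \<bar>real k - real j\<bar>" for j
    unfolding path_x_shifted[OF N] a0_def a1_def a2_def using N by (simp add: field_simps power2_eq_square)
  have "(\<Sum>j<N. path_x N k j) = real N * a0 + a1 * (\<Sum>j<N. real j) + a2 * (\<Sum>j<N. (real j)\<^sup>2)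
      - (\<Sum>j<N. \<bar>real k - real j\<bar>)"
    unfolding quadratic_in_j by (simp add: sum.distrib sum_subtractf sum_distrib_left)
  also have "\<dots> = 0"
    unfolding sum_lessThan_real sum_lessThan_real_square sum_lessThan_abs_diff[OF k] a0_def a1_def a2_def
    using N by (simp add: field_simps power2_eq_square)
  finally show ?thesis .
qed

lemma centering_mult_path_X: "centering_mat N * path_X N = path_X N"
proof (rule centering_mult_zero_col_sums[OF path_X_carrier])
  fix j assume "j < N"
  thus "(\<Sum>l<N. path_X N $$ (l, j)) = 0"
    using path_x_row_sum[OF \<open>j < N\<close>] by (simp add: path_X_index path_x_sym[of N _ j])
qed

lemma path_X_mult_centering: "path_X N * centering_mat N = path_X N"
  by (rule mult_centering_zero_row_sums[OF path_X_carrier]) (simp add: path_X_index path_x_row_sum)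

lemma path_x_second_difference:
  assumes N: "N > 0" and i: "i < N" and j: "j < N"
  shows "2 * path_x N i j - path_x N (i - 1) j - path_x N i (j - 1)
       = (if i = j then 2 else 0) + (2 * real i - real N) / real N + (2 * real j - real N) / real N"
proof -
  have Nr: "real N > 0" using N by simp
  consider "i = 0" "j = 0" | "i = 0" "j > 0" | "i > 0" "j = 0" | "i > 0" "j > 0" "i < j" | "i > 0" "j > 0" "i = j" | "i > 0" "j > 0" "i > j"
    by force
  thus ?thesis
  proof cases
    case 1 thus ?thesis using Nr by (simp add: field_simps)
  next
    case 2
    hence "real (j - 1) = real j - 1" by (simp add: of_nat_diff)
    thus ?thesis using 2 Nr by (simp add: path_x_shifted[OF N] field_simps power2_eq_square)
  next
    case 3
    hence "real (i - 1) = real i - 1" by (simp add: of_nat_diff)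
    thus ?thesis using 3 Nr by (simp add: path_x_shifted[OF N] field_simps power2_eq_square)
  next
    case 4
    hence a: "real (i - 1) = real i - 1" "real (j - 1) = real j - 1" by (simp_all add: of_nat_diff)
    have b: "real i + 1 \<le> real j" using 4 by simp
    have c: "\<bar>real i - real j\<bar> = real j - real i" "\<bar>real i - 1 - real j\<bar> = real j - real i + 1"
      "\<bar>real i - (real j - 1)\<bar> = real j - real i - 1" using b by auto
    show ?thesis using 4 Nr by (simp add: path_x_shifted[OF N] a c field_simps power2_eq_square)
  next
    case 5
    hence a: "real (i - 1) = real i - 1" "real (j - 1) = real j - 1" by (simp_all add: of_nat_diff)
    have c: "\<bar>real i - 1 - real j\<bar> = 1" "\<bar>real i - (real j - 1)\<bar> = 1" using 5 by auto
    show ?thesis using 5 Nr by (simp add: path_x_shifted[OF N] a c field_simps power2_eq_square)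
  next
    case 6
    hence a: "real (i - 1) = real i - 1" "real (j - 1) = real j - 1" by (simp_all add: of_nat_diff)
    have b: "real j + 1 \<le> real i" using 6 by simp
    have c: "\<bar>real i - real j\<bar> = real i - real j" "\<bar>real i - 1 - real j\<bar> = real i - real j - 1"
      "\<bar>real i - (real j - 1)\<bar> = real i - real j + 1" using b by auto
    show ?thesis using 6 Nr by (simp add: path_x_shifted[OF N] a c field_simps power2_eq_square)
  qed
qed

lemma laplacian_path_lyapunov_path_X:
  "laplacian (path_adj N) * path_X N + path_X N * transpose_mat (laplacian (path_adj N))
   = 2 \<cdot>\<^sub>m 1\<^sub>m N + mat N N (\<lambda>(i, j). (2 * real i - real N) / real N)
     + mat N N (\<lambda>(i, j). (2 * real j - real N) / real N)"
  (is "?lhs = ?rhs")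
proof -
  let ?F = "path_X N" and ?S = "shift_mat N"
  have "laplacian (path_adj N) * ?F = ?F - ?S * ?F"
    unfolding laplacian_path_adj
    using minus_mult_distrib_mat[OF one_carrier_mat shift_mat_carrier path_X_carrier] by simp
  moreover have "?F * transpose_mat (laplacian (path_adj N)) = ?F - ?F * transpose_mat ?S"
    unfolding laplacian_path_adj transpose_minus[OF one_carrier_mat shift_mat_carrier]
    using mult_minus_distrib_mat[OF path_X_carrier one_carrier_mat,
        of "transpose_mat (shift_mat N)"] by simp
  ultimately have lhs: "?lhs = (?F - ?S * ?F) + (?F - ?F * transpose_mat ?S)"
    by simp
  show ?thesis
  proof (rule eq_matI)
    fix i j assume "i < dim_row ?rhs" "j < dim_col ?rhs"
    hence i: "i < N" and j: "j < N" by simp_all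
    have "?lhs $$ (i, j) = 2 * path_x N i j - path_x N (i - 1) j - path_x N i (j - 1)"
      unfolding lhs using i j
      by (simp add: shift_mult_index[OF path_X_carrier i j] mult_transpose_shift_index[OF path_X_carrier i j]
          path_X_index del: index_mult_mat(1))
    also have "\<dots> = ?rhs $$ (i, j)"
      using path_x_second_difference[OF _ i j] i j by simp
    finally show "?lhs $$ (i, j) = ?rhs $$ (i, j)" .
  qed (simp_all add: lhs)
qed

lemma centered_lyapunov_path_X:
  "centering_mat N * (laplacian (path_adj N) * path_X N + path_X N * transpose_mat (laplacian (path_adj N)))
     * centering_mat N = 2 \<cdot>\<^sub>m centering_mat N"
proof -
  let ?P = "centering_mat N"
  let ?R = "mat N N (\<lambda>(i, j). (2 * real i - real N) / real N)"
  let ?C = "mat N N (\<lambda>(i, j). (2 * real j - real N) / real N)"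
  have P: "?P \<in> carrier_mat N N" and R: "?R \<in> carrier_mat N N" and C: "?C \<in> carrier_mat N N"
    by simp_all
  have I: "(2::real) \<cdot>\<^sub>m 1\<^sub>m N \<in> carrier_mat N N" by simp
  have "(2 \<cdot>\<^sub>m 1\<^sub>m N + ?R + ?C) * ?P = (2 \<cdot>\<^sub>m 1\<^sub>m N) * ?P + ?R * ?P + ?C * ?P"
    using add_mult_distrib_mat[OF add_carrier_mat[OF R] C P] add_mult_distrib_mat[OF I R P] by simp
  also have "\<dots> = 2 \<cdot>\<^sub>m ?P + ?C * ?P"
    using const_rows_mult_centering[of N N] mult_smult_assoc_mat[OF one_carrier_mat P] P C by simp
  finally have right: "(2 \<cdot>\<^sub>m 1\<^sub>m N + ?R + ?C) * ?P = 2 \<cdot>\<^sub>m ?P + ?C * ?P" .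
  have "?P * (2 \<cdot>\<^sub>m ?P + ?C * ?P) = 2 \<cdot>\<^sub>m (?P * ?P) + ?P * (?C * ?P)"
    using mult_add_distrib_mat[OF P smult_carrier_mat[OF P] mult_carrier_mat[OF C P]]
      mult_smult_distrib[OF P P] P C by simp
  also have "\<dots> = 2 \<cdot>\<^sub>m ?P"
    unfolding assoc_mult_mat[OF P C P, symmetric] centering_mat_idem centering_mult_const_cols
    using P by simp
  finally have "?P * ((2 \<cdot>\<^sub>m 1\<^sub>m N + ?R + ?C) * ?P) = 2 \<cdot>\<^sub>m ?P"
    unfolding right .
  thus ?thesis unfolding laplacian_path_lyapunov_path_X
    assoc_mult_mat[OF P add_carrier_mat[OF C] P] .
qed


lemma centered_laplacian_path_lyapunov:
  fixes Z :: "real mat"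
  assumes Z: "Z \<in> carrier_mat N N"
    and PZ: "centering_mat N * Z = Z" and ZP: "Z * centering_mat N = Z"
  shows "centering_mat N * (laplacian (path_adj N) * Z + Z * transpose_mat (laplacian (path_adj N)))
           * centering_mat N = 2 \<cdot>\<^sub>m Z - (centered_shift N * Z + Z * transpose_mat (centered_shift N))"
proof -
  let ?P = "centering_mat N" and ?S = "shift_mat N" and ?L = "laplacian (path_adj N)"
  have P: "?P \<in> carrier_mat N N" and S: "?S \<in> carrier_mat N N"
    and ST: "transpose_mat ?S \<in> carrier_mat N N" by simp_all
  note ac = assoc_mult_mat[of _ N N _ N _ N] and mc = mult_carrier_mat[of _ N N _ N]
  have PLZ: "?P * (?L * Z) = Z - centered_shift N * Z"
  proof -
    have "?P * (?L * Z) = ?P * Z - ?P * (?S * Z)"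
      unfolding laplacian_path_adj minus_mult_distrib_mat[OF one_carrier_mat S Z]
      using mult_minus_distrib_mat[OF P Z mult_carrier_mat[OF S Z]] Z by simp
    thus ?thesis unfolding PZ centered_shift_def using P S Z by (simp add: ac mc)
  qed
  have ZLP: "Z * (transpose_mat ?L * ?P) = Z - Z * transpose_mat (centered_shift N)"
  proof -
    have "Z * (transpose_mat ?L * ?P) = Z * ?P - Z * (transpose_mat ?S * ?P)"
      unfolding laplacian_path_adj transpose_minus[OF one_carrier_mat S] transpose_one
        minus_mult_distrib_mat[OF one_carrier_mat ST P]
      using mult_minus_distrib_mat[OF Z P mult_carrier_mat[OF ST P]] P by simp
    thus ?thesis unfolding ZP centered_shift_def transpose_mult[OF P S] transpose_centering_mat .
  qed
  have L: "?L \<in> carrier_mat N N" unfolding laplacian_path_adj by (rule minus_carrier_mat[OF S])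
  have "?P * (?L * Z + Z * transpose_mat ?L) * ?P
      = ?P * (?L * Z) * ?P + ?P * Z * (transpose_mat ?L * ?P)"
    using P L Z by (simp add: ac mc add_mult_distrib_mat[of _ N N _ _ N] mult_add_distrib_mat[of _ N N _ N])
  also have "\<dots> = ?P * (?L * Z) + Z * (transpose_mat ?L * ?P)"
    using P L Z PZ ZP by (simp add: ac mc)
  also have "\<dots> = 2 \<cdot>\<^sub>m Z - (centered_shift N * Z + Z * transpose_mat (centered_shift N))"
    unfolding PLZ ZLP centered_shift_def using Z by (intro eq_matI) auto
  finally show ?thesis .
qed


lemma centered_lyapunov_path_unique:
  fixes X Z :: "real mat"
  assumes X: "X \<in> carrier_mat N N" and Z: "Z \<in> carrier_mat N N"
    and "centering_mat N * X = X" "X * centering_mat N = X"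
    and "centering_mat N * Z = Z" "Z * centering_mat N = Z"
    and eq: "centering_mat N * (laplacian (path_adj N) * X + X * transpose_mat (laplacian (path_adj N)))
               * centering_mat N
           = centering_mat N * (laplacian (path_adj N) * Z + Z * transpose_mat (laplacian (path_adj N)))
               * centering_mat N"
  shows "X = Z"
proof -
  let ?M = "centered_shift N"
  have M: "?M \<in> carrier_mat N N" and MT: "transpose_mat ?M \<in> carrier_mat N N" by simp_all
  have D: "X - Z \<in> carrier_mat N N" using Z by (rule minus_carrier_mat)
  have X_Z: "2 \<cdot>\<^sub>m X - (?M * X + X * transpose_mat ?M) = 2 \<cdot>\<^sub>m Z - (?M * Z + Z * transpose_mat ?M)"
    using eq unfolding centered_laplacian_path_lyapunov[OF X assms(3,4)]
      centered_laplacian_path_lyapunov[OF Z assms(5,6)] .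
  have MD: "?M * (X - Z) = ?M * X - ?M * Z" using mult_minus_distrib_mat[OF M X Z] .
  have DM: "(X - Z) * transpose_mat ?M = X * transpose_mat ?M - Z * transpose_mat ?M"
    using minus_mult_distrib_mat[OF X Z MT] .
  have "?M * (X - Z) + (X - Z) * transpose_mat ?M = 2 \<cdot>\<^sub>m (X - Z)"
  proof (rule eq_matI)
    fix i j assume "i < dim_row (2 \<cdot>\<^sub>m (X - Z))" "j < dim_col (2 \<cdot>\<^sub>m (X - Z))"
    hence i: "i < N" and j: "j < N" using Z by simp_all
    have "(2 \<cdot>\<^sub>m X - (?M * X + X * transpose_mat ?M)) $$ (i, j)
        = (2 \<cdot>\<^sub>m Z - (?M * Z + Z * transpose_mat ?M)) $$ (i, j)"
      unfolding X_Z ..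
    thus "(?M * (X - Z) + (X - Z) * transpose_mat ?M) $$ (i, j) = (2 \<cdot>\<^sub>m (X - Z)) $$ (i, j)"
      unfolding MD DM using i j X Z by simp
  qed (use Z in simp_all)
  moreover have "transpose_mat ?M ^\<^sub>m N = 0\<^sub>m N N"
    unfolding transpose_pow_mat[OF M] centered_shift_nilpotent by simp
  ultimately have D0: "X - Z = 0\<^sub>m N N"
    using sylvester_nilpotent_eq_zero[OF M MT D centered_shift_nilpotent, of "2::real"] by simp
  show ?thesis
  proof (rule eq_matI)
    fix i j assume "i < dim_row Z" "j < dim_col Z"
    hence "i < N" "j < N" using Z by simp_all
    thus "X $$ (i, j) = Z $$ (i, j)"
      using arg_cong[OF D0, of "\<lambda>A. A $$ (i, j)"] X Z by simp
  qed (use X Z in simp_all)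
qed


lemma centered_gram:
  fixes Q \<Sigma> :: "real mat"
  assumes Q: "Q \<in> carrier_mat n N" and QQT: "Q * transpose_mat Q = 1\<^sub>m n"
    and QTQ: "transpose_mat Q * Q = centering_mat N" and \<Sigma>: "\<Sigma> \<in> carrier_mat n n"
  shows "centering_mat N * (transpose_mat Q * \<Sigma> * Q) = transpose_mat Q * \<Sigma> * Q"
    and "transpose_mat Q * \<Sigma> * Q * centering_mat N = transpose_mat Q * \<Sigma> * Q"
proof -
  let ?T = "transpose_mat Q"
  have T: "?T \<in> carrier_mat N n" using Q by simp
  have cancel: "Q * (?T * W) = W" if "W \<in> carrier_mat n m" for W m
    using assoc_mult_mat[OF Q T that, symmetric] QQT that by simp
  have cancel': "(W * Q) * ?T = W" if "W \<in> carrier_mat m n" for W m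
    using assoc_mult_mat[OF that Q T] QQT that by simp
  show "centering_mat N * (?T * \<Sigma> * Q) = ?T * \<Sigma> * Q"
    unfolding QTQ[symmetric] assoc_mult_mat[OF T \<Sigma> Q] assoc_mult_mat[OF T Q mult_carrier_mat[OF T mult_carrier_mat[OF \<Sigma> Q]]]
    cancel[OF mult_carrier_mat[OF \<Sigma> Q]] ..
  show "?T * \<Sigma> * Q * centering_mat N = ?T * \<Sigma> * Q"
    unfolding QTQ[symmetric] assoc_mult_mat[OF mult_carrier_mat[OF mult_carrier_mat[OF T \<Sigma>] Q] T Q, symmetric]
    cancel'[OF mult_carrier_mat[OF T \<Sigma>]] ..
qed


lemma centered_lyapunov_gram:
  fixes Q \<Sigma> L :: "real mat"
  assumes Q: "Q \<in> carrier_mat n N" and QQT: "Q * transpose_mat Q = 1\<^sub>m n"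
    and QTQ: "transpose_mat Q * Q = centering_mat N" and \<Sigma>: "\<Sigma> \<in> carrier_mat n n"
    and L: "L \<in> carrier_mat N N"
    and lyapunov: "Q * L * transpose_mat Q * \<Sigma> + \<Sigma> * transpose_mat (Q * L * transpose_mat Q) = 1\<^sub>m n"
  shows "centering_mat N * (L * (transpose_mat Q * \<Sigma> * Q) + (transpose_mat Q * \<Sigma> * Q) * transpose_mat L)
           * centering_mat N = centering_mat N"
proof -
  let ?T = "transpose_mat Q" and ?P = "centering_mat N" and ?Lr = "Q * L * transpose_mat Q"
  define Y where "Y = ?T * \<Sigma> * Q"
  have T: "?T \<in> carrier_mat N n" using Q by simp
  have P: "?P \<in> carrier_mat N N" and LT: "transpose_mat L \<in> carrier_mat N N" using L by simp_all
  note mc = mult_carrier_mat[of _ N N _ N] mult_carrier_mat[of _ N N _ n] mult_carrier_mat[of _ N n _ N]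
    mult_carrier_mat[of _ N n _ n] mult_carrier_mat[of _ n N _ N] mult_carrier_mat[of _ n N _ n]
    mult_carrier_mat[of _ n n _ N] mult_carrier_mat[of _ n n _ n]
  note ac = assoc_mult_mat[of _ N N _ N _ N] assoc_mult_mat[of _ N N _ n _ N]
    assoc_mult_mat[of _ N n _ N _ N] assoc_mult_mat[of _ N n _ n _ N]
    assoc_mult_mat[of _ n N _ N _ N] assoc_mult_mat[of _ n N _ n _ N]
    assoc_mult_mat[of _ n n _ N _ N] assoc_mult_mat[of _ n n _ n _ N]
    assoc_mult_mat[of _ N n _ N _ n] assoc_mult_mat[of _ n N _ N _ n]
    assoc_mult_mat[of _ n n _ n _ n] assoc_mult_mat[of _ N n _ n _ n]
  have Y: "Y \<in> carrier_mat N N" unfolding Y_def using T \<Sigma> Q by (simp add: mc)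
  have PY: "?P * Y = Y" and YP: "Y * ?P = Y"
    unfolding Y_def using centered_gram[OF Q QQT QTQ \<Sigma>] by simp_all
  have Lr_T: "transpose_mat ?Lr = Q * (transpose_mat L * ?T)"
    using transpose_mult[OF mult_carrier_mat[OF Q L] T] transpose_mult[OF Q L] Q L
    by (simp add: ac mc)
  have c1: "?Lr * \<Sigma> \<in> carrier_mat n n" and c2: "\<Sigma> * transpose_mat ?Lr \<in> carrier_mat n n"
    unfolding Lr_T using Q L LT T \<Sigma> by (simp_all add: mc)
  have "?T * (?Lr * \<Sigma> + \<Sigma> * transpose_mat ?Lr) * Q = ?T * (?Lr * \<Sigma>) * Q + ?T * (\<Sigma> * transpose_mat ?Lr) * Q"
    using c1 c2 T Q by (simp add: mult_add_distrib_mat[OF T c1 c2] add_mult_distrib_mat[of _ N n _ _ N] mc)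
  also have "?T * (?Lr * \<Sigma>) * Q = ?P * (L * Y)"
    unfolding Y_def QTQ[symmetric] using T \<Sigma> Q L by (simp add: ac mc)
  also have "?T * (\<Sigma> * transpose_mat ?Lr) * Q = Y * (transpose_mat L * ?P)"
    unfolding Y_def Lr_T QTQ[symmetric] using T \<Sigma> Q LT by (simp add: ac mc)
  finally have "?P * (L * Y) + Y * (transpose_mat L * ?P) = ?P"
    unfolding lyapunov using T QTQ by simp
  moreover have "?P * (Y * (transpose_mat L * ?P)) = Y * (transpose_mat L * ?P)"
    using assoc_mult_mat[OF P Y mult_carrier_mat[OF LT P], symmetric] PY by simp
  moreover have "?P * (L * Y + Y * transpose_mat L) * ?P = ?P * (L * Y) + ?P * (Y * (transpose_mat L * ?P))"
    using P L LT Y YP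
    by (simp add: ac mc add_mult_distrib_mat[of _ N N _ _ N] mult_add_distrib_mat[of _ N N _ N])
  ultimately show ?thesis unfolding Y_def by simp
qed


lemma X_mat_centered_lyapunov:
  fixes Q \<Sigma> L :: "real mat"
  assumes Q: "Q \<in> carrier_mat n N" and QQT: "Q * transpose_mat Q = 1\<^sub>m n"
    and QTQ: "transpose_mat Q * Q = centering_mat N" and \<Sigma>: "\<Sigma> \<in> carrier_mat n n"
    and L: "L \<in> carrier_mat N N"
    and lyapunov: "Q * L * transpose_mat Q * \<Sigma> + \<Sigma> * transpose_mat (Q * L * transpose_mat Q) = 1\<^sub>m n"
  shows "X_mat Q \<Sigma> \<in> carrier_mat N N"
    and "centering_mat N * X_mat Q \<Sigma> = X_mat Q \<Sigma>"
    and "X_mat Q \<Sigma> * centering_mat N = X_mat Q \<Sigma>"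
    and "centering_mat N * (L * X_mat Q \<Sigma> + X_mat Q \<Sigma> * transpose_mat L) * centering_mat N
           = 2 \<cdot>\<^sub>m centering_mat N"
proof -
  let ?P = "centering_mat N"
  define Y where "Y = transpose_mat Q * \<Sigma> * Q"
  have Y: "Y \<in> carrier_mat N N" unfolding Y_def using Q \<Sigma> by auto
  have P: "?P \<in> carrier_mat N N" and LT: "transpose_mat L \<in> carrier_mat N N" using L by simp_all
  have X: "X_mat Q \<Sigma> = 2 \<cdot>\<^sub>m Y" unfolding X_mat_def Y_def ..
  note gram = centered_gram[OF Q QQT QTQ \<Sigma>, folded Y_def]
  show "X_mat Q \<Sigma> \<in> carrier_mat N N" unfolding X using Y by simp
  show "?P * X_mat Q \<Sigma> = X_mat Q \<Sigma>"
    unfolding X mult_smult_distrib[OF P Y] gram(1) ..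
  show "X_mat Q \<Sigma> * ?P = X_mat Q \<Sigma>"
    unfolding X mult_smult_assoc_mat[OF Y P] gram(2) ..
  have "L * (2 \<cdot>\<^sub>m Y) + (2 \<cdot>\<^sub>m Y) * transpose_mat L = 2 \<cdot>\<^sub>m (L * Y + Y * transpose_mat L)"
    unfolding mult_smult_distrib[OF L Y] mult_smult_assoc_mat[OF Y LT]
    using add_smult_distrib_left_mat[OF mult_carrier_mat[OF L Y] mult_carrier_mat[OF Y LT]] by simp
  thus "?P * (L * X_mat Q \<Sigma> + X_mat Q \<Sigma> * transpose_mat L) * ?P = 2 \<cdot>\<^sub>m ?P"
    unfolding X using centered_lyapunov_gram[OF Q QQT QTQ \<Sigma> L lyapunov, folded Y_def] P L Y LT
    by (simp add: mult_smult_distrib[of _ N N _ N] mult_smult_assoc_mat[of _ N N _ N] mult_carrier_mat[of _ N N _ N])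
qed

theorem lemma5:
  fixes N :: nat and Q \<Sigma> :: "real mat"
  assumes "Q \<in> carrier_mat (N - 1) N"
    and "Q *\<^sub>v (vec N (\<lambda>_. 1)) = 0\<^sub>v (N - 1)"
    and "Q * transpose_mat Q = 1\<^sub>m (N - 1)"
    and "transpose_mat Q * Q = centering_mat N"
    and "\<Sigma> \<in> carrier_mat (N - 1) (N - 1)"
    and "(Q * laplacian (path_adj N) * transpose_mat Q) * \<Sigma>
         + \<Sigma> * transpose_mat (Q * laplacian (path_adj N) * transpose_mat Q) = 1\<^sub>m (N - 1)"
  shows "\<forall>k<N. \<forall>j<N. X_mat Q \<Sigma> $$ (k, j) =
     (2 * real N ^ 2 + 3 * real N + 1 + 3 * real (k+1) ^ 2 + 3 * real (j+1) ^ 2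
       - 3 * (real N + 1) * real (k+1) - 3 * (real N + 1) * real (j+1)) / (3 * real N)
     - \<bar>real (k+1) - real (j+1)\<bar>"
proof -
  have L: "laplacian (path_adj N) \<in> carrier_mat N N"
    unfolding laplacian_path_adj by (rule minus_carrier_mat) simp
  note X = X_mat_centered_lyapunov[OF assms(1,3,4,5) L assms(6)]
  have "X_mat Q \<Sigma> = path_X N"
    using X centering_mult_path_X path_X_mult_centering centered_lyapunov_path_X
    by (intro centered_lyapunov_path_unique[OF X(1) path_X_carrier]) simp_all
  thus ?thesis by (simp add: path_X_index path_x_def)
qed

end
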